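(* Let $\mathcal{X}:f(x,y,z)=0$ be a real surface of revolution with axis the $x$-axis, $f\in\mathbb{R}[x,y,z]$ absolutely irreducible, with profile curve $p(x,y)=f(x,y,0)=\sum_i p_i(x)y^{2i}$, and let $\mathcal{P}^2:\sum_i p_i(x)y^i=0$. Suppose $\mathcal{P}^2$ is rational and let $t\mapsto\big(p(t)/q(t),\,r(t)/q(t)\big)$, $p,q,r\in\mathbb{R}[t]$, be a proper parameterization of $\mathcal{P}^2$. Put $g=\gcd(r,q)$, $\tilde r=r/g$, $\tilde q=q/g$, $\tilde p = p/g$, and write $\tilde r\,\tilde q=h\,d^2$ with $h,d\in\mathbb{R}[t]$ and $h$ square-free (so $h=\hat r\hat q$ with $\hat r,\hat q$ the square-free parts of $\tilde r,\tilde q$, $\gcd(\hat r,\hat q)=1$). Then $\mathcal{X}$ is birationally equivalent to the tubular surface $$\mathcal{T}:\ y^2+z^2-h(x)=0,$$ and a birational map $\tau:\mathcal{T}\dashrightarrow\mathcal{X}$ is given by $$\tau(x,y,z)=\Big(\frac{\tilde p(x)}{\tilde q(x)},\ \frac{d(x)\,y}{\tilde q(x)},\ \frac{d(x)\,z}{\tilde q(x)}\Big).$$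
   Context: A surface of revolution (SOR): rotate an algebraic space curve $\mathcal{G}$ (distinct from the line $\mathcal{A}$ and not a line perpendicular to $\mathcal{A}$) about a line $\mathcal{A}\subset\mathbb{R}^3$. Absolutely irreducible means not a product of two non-constant polynomials in $\mathbb{C}[x,y,z]$. A parameterization is proper if it has a rational inverse. A tubular surface is a surface with equation $A(x)y^2+B(x)z^2+C(x)=0$. *)

theory Defs
  imports Complex_Main "HOL-Computational_Algebra.Computational_Algebra" "HOL-Computational_Algebra.Field_as_Ring"
begin

(* Trivariate polynomials in x, y, z are represented as nested univariate polynomials
   ('a poly poly poly = ((R[x])[y])[z]).  The innermost variable is x, then y, the outermost z. *)

definition eval3 :: "'a::comm_semiring_0 poly poly poly \<Rightarrow> 'a \<Rightarrow> 'a \<Rightarrow> 'a \<Rightarrow> 'a" where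
  "eval3 F x y z = poly (poly (poly F [:[:z:]:]) [:y:]) x"

definition eval2 :: "'a::comm_semiring_0 poly poly \<Rightarrow> 'a \<Rightarrow> 'a \<Rightarrow> 'a" where
  "eval2 F x y = poly (poly F [:y:]) x"

definition cpoly3 :: "real poly poly poly \<Rightarrow> complex poly poly poly" where
  "cpoly3 F = map_poly (map_poly (map_poly complex_of_real)) F"

definition evalC :: "real poly poly poly \<Rightarrow> complex \<times> complex \<times> complex \<Rightarrow> complex" where
  "evalC F P = (case P of (x, y, z) \<Rightarrow> eval3 (cpoly3 F) x y z)"

definition zero_set :: "real poly poly poly \<Rightarrow> (complex \<times> complex \<times> complex) set" where
  "zero_set F = {P. evalC F P = 0}"

definition absolutely_irreducible :: "real poly poly poly \<Rightarrow> bool" where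
  "absolutely_irreducible F \<longleftrightarrow> irreducible (cpoly3 F)"

(* f defines a surface of revolution with axis the x-axis: f is invariant under all rotations
   about the x-axis, and the surface is not a (union of) plane(s) perpendicular to the axis,
   i.e. f genuinely depends on (y,z)  (the generating curve is not a line perpendicular to A). *)
definition surface_of_revolution_x_axis :: "real poly poly poly \<Rightarrow> bool" where
  "surface_of_revolution_x_axis f \<longleftrightarrow>
     (\<forall>x y z \<theta>. eval3 f x (y * cos \<theta> - z * sin \<theta>) (y * sin \<theta> + z * cos \<theta>) = eval3 f x y z) \<and>
     (\<exists>x y z. eval3 f x y z \<noteq> eval3 f x 0 0)"

(* profile p(x,y) = f(x,y,0) = sum_i p_i(x) y^(2i); the curve P^2 : sum_i p_i(x) y^i = 0 *)
definition profile :: "real poly poly poly \<Rightarrow> real poly poly" where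
  "profile f = coeff f 0"

definition profile_half :: "real poly poly poly \<Rightarrow> real poly poly" where
  "profile_half f = (\<Sum>i\<le>degree (profile f). monom (coeff (profile f) (2 * i)) i)"

(* t \<mapsto> (p(t)/q(t), r(t)/q(t)) is a proper (i.e. rationally invertible) parameterization
   of the plane curve C(x,y) = 0 *)
definition proper_parametrization ::
  "real poly poly \<Rightarrow> real poly \<Rightarrow> real poly \<Rightarrow> real poly \<Rightarrow> bool" where
  "proper_parametrization C p q r \<longleftrightarrow>
     q \<noteq> 0 \<and>
     (\<forall>t. poly q t \<noteq> 0 \<longrightarrow> eval2 C (poly p t / poly q t) (poly r t / poly q t) = 0) \<and>
     (\<exists>A B :: real poly poly.
        (\<exists>t. poly q t \<noteq> 0 \<and> eval2 B (poly p t / poly q t) (poly r t / poly q t) \<noteq> 0) \<and>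
        (\<forall>t. poly q t \<noteq> 0 \<and> eval2 B (poly p t / poly q t) (poly r t / poly q t) \<noteq> 0 \<longrightarrow>
             eval2 A (poly p t / poly q t) (poly r t / poly q t) /
             eval2 B (poly p t / poly q t) (poly r t / poly q t) = t))"

(* rational maps C^3 --> C^3 with real coefficients: (N1, N2, N3, Den) *)
type_synonym ratmap3 =
  "real poly poly poly \<times> real poly poly poly \<times> real poly poly poly \<times> real poly poly poly"

definition rm_defined :: "ratmap3 \<Rightarrow> complex \<times> complex \<times> complex \<Rightarrow> bool" where
  "rm_defined R P = (case R of (N1, N2, N3, Dn) \<Rightarrow> evalC Dn P \<noteq> 0)"

definition rm_eval :: "ratmap3 \<Rightarrow> complex \<times> complex \<times> complex \<Rightarrow> complex \<times> complex \<times> complex" where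
  "rm_eval R P = (case R of (N1, N2, N3, Dn) \<Rightarrow>
      (evalC N1 P / evalC Dn P, evalC N2 P / evalC Dn P, evalC N3 P / evalC Dn P))"

(* "holds on a nonempty Zariski-open subset of V" is expressed by a polynomial D not vanishing
   identically on V.  phi : V --> W is birational if it agrees with a rational map on a nonempty
   Zariski open subset of V, and there is a rational map psi : W --> V such that psi o phi = id
   on a nonempty Zariski open subset of V and phi o psi = id on a nonempty Zariski open subset of W. *)
definition birational_map ::
  "(complex \<times> complex \<times> complex) set \<Rightarrow> (complex \<times> complex \<times> complex) set \<Rightarrow>
   (complex \<times> complex \<times> complex \<Rightarrow> complex \<times> complex \<times> complex) \<Rightarrow> bool" where
  "birational_map V W \<phi> \<longleftrightarrow>
     (\<exists>R\<phi> R\<psi> :: ratmap3. \<exists>D E :: real poly poly poly.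
        (\<exists>P\<in>V. evalC D P \<noteq> 0) \<and> (\<exists>Q\<in>W. evalC E Q \<noteq> 0) \<and>
        (\<forall>P\<in>V. evalC D P \<noteq> 0 \<longrightarrow>
            rm_defined R\<phi> P \<and> \<phi> P = rm_eval R\<phi> P \<and> \<phi> P \<in> W \<and>
            rm_defined R\<psi> (\<phi> P) \<and> rm_eval R\<psi> (\<phi> P) = P) \<and>
        (\<forall>Q\<in>W. evalC E Q \<noteq> 0 \<longrightarrow>
            rm_defined R\<psi> Q \<and> rm_eval R\<psi> Q \<in> V \<and>
            rm_defined R\<phi> (rm_eval R\<psi> Q) \<and> \<phi> (rm_eval R\<psi> Q) = Q))"

definition birationally_equivalent ::
  "(complex \<times> complex \<times> complex) set \<Rightarrow> (complex \<times> complex \<times> complex) set \<Rightarrow> bool" where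
  "birationally_equivalent V W \<longleftrightarrow> (\<exists>\<phi>. birational_map V W \<phi>)"

definition tube :: "real poly \<Rightarrow> (complex \<times> complex \<times> complex) set" where
  "tube h = {(x, y, z). y^2 + z^2 - poly (map_poly complex_of_real h) x = 0}"

end

theory Submission
  imports Defs
begin

text \<open>
  Proof strategy.  Let \<open>P(x, w)\<close> be the halved profile, so that the curve \<open>\<P>\<^sup>2\<close> is \<open>P = 0\<close>.

  \<^item> Invariance under rotations makes the profile even in \<open>y\<close> and gives the identity
    \<open>f(x, y, z) = P(x, y\<^sup>2 + z\<^sup>2)\<close>.  Hence \<open>P\<close> is irreducible over \<open>\<complex>\<close> and not constant in \<open>w\<close>.
  \<^item> A polynomial vanishing at infinitely many points of an irreducible plane curve is a
    multiple of it (Bezout identity over the fraction field, plus finiteness on vertical lines).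
  \<^item> The parameterization \<open>t \<mapsto> (p/q, r/q)\<close> and its inverse \<open>A/B\<close> are only given for real \<open>t\<close>.
    Rational functions with denominator a power of \<open>q\<close> satisfy an identity principle, so both
    extend to complex parameters; the parameterization then hits infinitely many curve points,
    and identities along it hold on the whole curve.  In particular \<open>x q(A/B) = p(A/B)\<close> and
    \<open>w q(A/B) = r(A/B)\<close> on \<open>P = 0\<close> (homogenized to avoid the denominator \<open>B\<close>).
  \<^item> The map \<open>\<tau>\<close> of the theorem and \<open>\<psi>(X, Y, Z) = (t, Y q~(t)/d(t), Z q~(t)/d(t))\<close> with
    \<open>t = A/B (X, Y\<^sup>2 + Z\<^sup>2)\<close> are inverse to each other on nonempty Zariski open subsets of the
    tube and of the surface; as both are rational maps, this is birationality.
\<close>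

abbreviation cpoly1 :: "real poly \<Rightarrow> complex poly" where
  "cpoly1 \<equiv> map_poly complex_of_real"

abbreviation cpoly2 :: "real poly poly \<Rightarrow> complex poly poly" where
  "cpoly2 \<equiv> map_poly cpoly1"

lemma map_poly_add_hom:
  assumes "f 0 = 0" "\<And>a b. f (a + b) = f a + f b"
  shows "map_poly f (p + q) = map_poly f p + map_poly f q"
  by (rule poly_eqI) (simp add: coeff_map_poly assms)

lemma map_poly_mult_hom:
  fixes f :: "'a::comm_ring_1 \<Rightarrow> 'b::comm_ring_1"
  assumes "f 0 = 0" "\<And>a b. f (a + b) = f a + f b" "\<And>a b. f (a * b) = f a * f b"
  shows "map_poly f (p * q) = map_poly f p * map_poly f q"
  by (induction p) (simp_all add: map_poly_add_hom map_poly_smult assms map_poly_pCons)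

lemma poly_map_poly_hom:
  assumes "f 0 = 0" "\<And>a b. f (a + b) = f a + f b" "\<And>a b. f (a * b) = f a * f b"
  shows "f (poly p x) = poly (map_poly f p) (f x)"
  by (induction p) (auto simp: map_poly_pCons assms)

lemma cpoly1_add: "cpoly1 (p + q) = cpoly1 p + cpoly1 q"
  by (rule map_poly_add_hom) auto

lemma cpoly1_mult: "cpoly1 (p * q) = cpoly1 p * cpoly1 q"
  by (rule map_poly_mult_hom) auto

lemma cpoly1_power: "cpoly1 (p ^ n) = cpoly1 p ^ n"
  by (induction n) (simp_all add: cpoly1_mult)

lemma cpoly2_add: "cpoly2 (p + q) = cpoly2 p + cpoly2 q"
  by (rule map_poly_add_hom) (auto simp: cpoly1_add)

lemma cpoly2_mult: "cpoly2 (p * q) = cpoly2 p * cpoly2 q"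
  by (rule map_poly_mult_hom) (auto simp: cpoly1_add cpoly1_mult)

lemma cpoly3_add: "cpoly3 (p + q) = cpoly3 p + cpoly3 q"
  unfolding cpoly3_def by (rule map_poly_add_hom) (auto simp: cpoly2_add)

lemma cpoly3_mult: "cpoly3 (p * q) = cpoly3 p * cpoly3 q"
  unfolding cpoly3_def by (rule map_poly_mult_hom) (auto simp: cpoly2_add cpoly2_mult)

lemma poly_cpoly1_of_real: "poly (cpoly1 c) (of_real t) = of_real (poly c t)"
  by (induction c) (auto simp: map_poly_pCons)

lemma cpoly1_eq_0_iff [simp]: "cpoly1 c = 0 \<longleftrightarrow> c = 0"
  by (simp add: map_poly_eq_0_iff)

lemma infinite_nonroots:
  fixes P :: "'a::{idom,ring_char_0} poly"
  assumes "P \<noteq> 0"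
  shows "infinite {t. poly P t \<noteq> 0}"
proof
  assume "finite {t. poly P t \<noteq> 0}"
  moreover have "finite {t. poly P t = 0}" using assms by (rule poly_roots_finite)
  ultimately have "finite ({t. poly P t \<noteq> 0} \<union> {t. poly P t = 0})" by simp
  moreover have "{t. poly P t \<noteq> 0} \<union> {t. poly P t = 0} = UNIV" by auto
  ultimately show False using infinite_UNIV_char_0 by metis
qed

lemma eval2_add: "eval2 (F + G) a b = eval2 F a b + eval2 G a b"
  by (simp add: eval2_def)

lemma eval2_mult: "eval2 (F * G) a b = eval2 F a b * eval2 G a b"
  by (simp add: eval2_def)

lemma eval2_diff: "eval2 (F - G) a b = eval2 F a b - eval2 G a b"
  for F G :: "'a::comm_ring poly poly"
  by (simp add: eval2_def)

lemma eval2_smult: "eval2 (smult c F) a b = poly c a * eval2 F a b"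
  by (simp add: eval2_def)

lemma eval2_cpoly2_pCons:
  "eval2 (cpoly2 (pCons c G)) a b = poly (cpoly1 c) a + b * eval2 (cpoly2 G) a b"
  by (simp add: eval2_def map_poly_pCons)

lemma eval2_cpoly2_of_real:
  "eval2 (cpoly2 G) (of_real a) (of_real b) = of_real (eval2 G a b)"
  unfolding eval2_def by (induction G) (auto simp: map_poly_pCons poly_cpoly1_of_real)

lemma eval3_add: "eval3 (F + G) a b c = eval3 F a b c + eval3 G a b c"
  by (simp add: eval3_def)

lemma eval3_mult: "eval3 (F * G) a b c = eval3 F a b c * eval3 G a b c"
  by (simp add: eval3_def)

lemma eval3_diff: "eval3 (F - G) a b c = eval3 F a b c - eval3 G a b c"
  for F G :: "'a::comm_ring poly poly poly"
  by (simp add: eval3_def)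

lemma eval2_as_poly: "eval2 Q x y = poly (map_poly (\<lambda>c. poly c x) Q) y"
  by (induction Q) (auto simp: eval2_def map_poly_pCons)

lemma eval3_as_poly: "eval3 G x y z = poly (map_poly (\<lambda>c. eval2 c x y) G) z"
  by (induction G) (auto simp: eval3_def eval2_def map_poly_pCons)

lemma eval2_eq_0_imp_0:
  fixes Q :: "'a::{idom,ring_char_0} poly poly"
  assumes "\<And>x y. eval2 Q x y = 0"
  shows "Q = 0"
proof -
  have "map_poly (\<lambda>c. poly c x) Q = 0" for x
    using assms by (simp add: eval2_as_poly poly_all_0_iff_0[symmetric])
  then have "poly (coeff Q k) x = 0" for k x
    by (metis coeff_0 coeff_map_poly poly_0)
  then have "coeff Q k = 0" for k by (simp add: poly_all_0_iff_0[symmetric])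
  then show ?thesis by (simp add: poly_eq_iff)
qed

lemma eval3_eq_0_imp_0:
  fixes G :: "'a::{idom,ring_char_0} poly poly poly"
  assumes "\<And>x y z. eval3 G x y z = 0"
  shows "G = 0"
proof -
  have "map_poly (\<lambda>c. eval2 c x y) G = 0" for x y
    using assms by (simp add: eval3_as_poly poly_all_0_iff_0[symmetric])
  then have "eval2 (coeff G k) x y = 0" for k x y
    by (metis coeff_0 coeff_map_poly eval2_def poly_0)
  then have "coeff G k = 0" for k using eval2_eq_0_imp_0 by blast
  then show ?thesis by (simp add: poly_eq_iff)
qed

lemma poly2_eqI:
  fixes F G :: "'a::{idom,ring_char_0} poly poly"
  assumes "\<And>x y. eval2 F x y = eval2 G x y"
  shows "F = G"
  using eval2_eq_0_imp_0[of "F - G"] assms by (simp add: eval2_diff)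

lemma poly3_eqI:
  fixes F G :: "'a::{idom,ring_char_0} poly poly poly"
  assumes "\<And>x y z. eval3 F x y z = eval3 G x y z"
  shows "F = G"
  using eval3_eq_0_imp_0[of "F - G"] assms by (simp add: eval3_diff)

section \<open>Surfaces of revolution\<close>

text \<open>Substituting \<open>y\<^sup>2 + z\<^sup>2\<close> for the second variable of a bivariate polynomial \<open>A(x, w)\<close>
  gives the surface obtained by rotating the curve \<open>A(x, y\<^sup>2) = 0\<close> about the \<open>x\<close>-axis.\<close>

definition radial :: "'a::comm_ring_1 poly poly \<Rightarrow> 'a poly poly poly" where
  "radial A = poly (map_poly (\<lambda>c. [:[:c:]:]) A) [: [:0, 0, 1:], 0, 1 :]"

lemma eval3_radial: "eval3 (radial A) x y z = eval2 A x (y\<^sup>2 + z\<^sup>2)"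
  unfolding radial_def
  by (induction A) (auto simp: eval3_def eval2_def map_poly_pCons power2_eq_square algebra_simps)

lemma radial_mult: "radial (A * B) = radial A * radial B"
  for A B :: "'a::{idom,ring_char_0} poly poly"
  by (rule poly3_eqI) (simp add: eval3_radial eval3_mult eval2_mult)

lemma radial_one: "radial (1 :: 'a::{idom,ring_char_0} poly poly) = 1"
  by (rule poly3_eqI) (simp only: eval3_radial, simp add: eval2_def eval3_def)

lemma cpoly3_radial: "cpoly3 (radial A) = radial (cpoly2 A)"
proof -
  have hom: "map_poly cpoly2 (poly P v) = poly (map_poly (map_poly cpoly2) P) (map_poly cpoly2 v)"
    for P :: "real poly poly poly poly" and v
    by (rule poly_map_poly_hom)
       (auto simp: cpoly2_add cpoly2_mult intro: map_poly_add_hom map_poly_mult_hom)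
  have "map_poly (map_poly cpoly2) (map_poly (\<lambda>c. [:[:c:]:]) A) = map_poly (\<lambda>c. [:[:c:]:]) (cpoly2 A)"
    by (simp add: map_poly_map_poly o_def map_poly_pCons)
  then show ?thesis unfolding cpoly3_def radial_def hom by (simp add: map_poly_pCons)
qed

lemma eval3_z0: "eval3 f x y 0 = eval2 (profile f) x y"
  by (simp add: eval3_def eval2_def profile_def poly_0_coeff_0[symmetric])

lemma sor_eval_radius:
  assumes sor: "surface_of_revolution_x_axis f"
  shows "eval3 f x y z = eval2 (profile f) x (sqrt (y\<^sup>2 + z\<^sup>2))"
proof (cases "y\<^sup>2 + z\<^sup>2 = 0")
  case True
  then have "y = 0" "z = 0" by (auto simp: add_nonneg_eq_0_iff)
  then show ?thesis by (simp add: eval3_z0)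
next
  case False
  define \<rho> where "\<rho> = sqrt (y\<^sup>2 + z\<^sup>2)"
  have "y\<^sup>2 + z\<^sup>2 > 0" using False by (simp add: add_nonneg_nonneg order_less_le)
  then have \<rho>_pos: "\<rho> > 0" by (simp add: \<rho>_def)
  have "(y / \<rho>)\<^sup>2 + (z / \<rho>)\<^sup>2 = 1" using \<rho>_pos False
    by (simp add: \<rho>_def power_divide add_divide_distrib[symmetric] add_nonneg_nonneg)
  then obtain \<theta> where \<theta>: "y / \<rho> = cos \<theta>" "z / \<rho> = sin \<theta>"
    using sincos_total_2pi by metis
  have "eval3 f x (\<rho> * cos \<theta> - 0 * sin \<theta>) (\<rho> * sin \<theta> + 0 * cos \<theta>) = eval3 f x \<rho> 0"
    using sor unfolding surface_of_revolution_x_axis_def by blast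
  moreover have "\<rho> * cos \<theta> = y" "\<rho> * sin \<theta> = z" using \<theta> \<rho>_pos by (auto simp: field_simps)
  ultimately show ?thesis by (simp add: eval3_z0 \<rho>_def)
qed

text \<open>Rotation by \<open>\<pi>\<close> shows that the profile \<open>p(x, y)\<close> is even in \<open>y\<close>.\<close>

lemma sor_profile_odd_coeff:
  assumes sor: "surface_of_revolution_x_axis f" and "odd j"
  shows "coeff (profile f) j = 0"
proof -
  have "poly (coeff (profile f) j) x = 0" for x
  proof -
    define P where "P = map_poly (\<lambda>c. poly c x) (profile f)"
    have "eval3 f x (r * cos pi - 0 * sin pi) (r * sin pi + 0 * cos pi) = eval3 f x r 0" for r
      using sor unfolding surface_of_revolution_x_axis_def by blast
    then have "poly P (- r) = poly P r" for r by (simp add: P_def eval2_as_poly[symmetric] eval3_z0[symmetric])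
    then have "poly (pcompose P [:0, -1:]) = poly P" by (auto simp: poly_pcompose)
    then have "pcompose P [:0, -1:] = P" by (simp add: poly_eq_poly_eq_iff)
    then have "coeff (pcompose P [:0, -1:]) j = coeff P j" by simp
    then have "coeff P j = 0" using \<open>odd j\<close> by (simp add: coeff_pcompose_linear)
    then show ?thesis by (simp add: P_def coeff_map_poly)
  qed
  then show ?thesis by (simp add: poly_all_0_iff_0[symmetric])
qed

lemma poly_as_sum_upto:
  fixes x :: "'a::comm_semiring_1"
  assumes "degree p \<le> M"
  shows "poly p x = (\<Sum>j\<le>M. coeff p j * x ^ j)"
proof -
  have "poly p x = (\<Sum>j\<le>degree p. coeff p j * x ^ j)" by (rule poly_altdef)
  also have "\<dots> = (\<Sum>j\<le>M. coeff p j * x ^ j)"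
    by (rule sum.mono_neutral_left) (use assms in \<open>auto simp: coeff_eq_0\<close>)
  finally show ?thesis .
qed

lemma sum_even_powers:
  fixes a :: "nat \<Rightarrow> 'a::comm_ring_1"
  assumes "\<And>j. odd j \<Longrightarrow> a j = 0" "\<And>j. j > n \<Longrightarrow> a j = 0"
  shows "(\<Sum>j\<le>n. a j * r ^ j) = (\<Sum>i\<le>n. a (2 * i) * (r\<^sup>2) ^ i)"
proof -
  have "(\<Sum>j\<le>n. a j * r ^ j) = (\<Sum>j\<le>2 * n. a j * r ^ j)"
    by (rule sum.mono_neutral_left) (auto simp: assms)
  also have "\<dots> = (\<Sum>j\<in>(\<lambda>i. 2 * i) ` {..n}. a j * r ^ j)"
  proof (rule sum.mono_neutral_right)
    show "\<forall>j\<in>{..2 * n} - (\<lambda>i. 2 * i) ` {..n}. a j * r ^ j = 0"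
    proof
      fix j assume j: "j \<in> {..2 * n} - (\<lambda>i. 2 * i) ` {..n}"
      then have "odd j" by (auto elim!: evenE)
      then show "a j * r ^ j = 0" by (simp add: assms)
    qed
  qed auto
  also have "\<dots> = (\<Sum>i\<le>n. a (2 * i) * (r\<^sup>2) ^ i)"
    by (subst sum.reindex) (auto simp: inj_on_def power_mult)
  finally show ?thesis .
qed

lemma eval2_profile_half:
  "eval2 (profile_half f) x w = (\<Sum>i\<le>degree (profile f). poly (coeff (profile f) (2 * i)) x * w ^ i)"
  by (simp add: eval2_def profile_half_def poly_sum poly_monom)

lemma sor_eval_profile_half:
  assumes sor: "surface_of_revolution_x_axis f"
  shows "eval3 f x y z = eval2 (profile_half f) x (y\<^sup>2 + z\<^sup>2)"
proof -
  define n where "n = degree (profile f)"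
  define P where "P = map_poly (\<lambda>c. poly c x) (profile f)"
  have deg_P: "degree P \<le> n" unfolding P_def n_def by (rule map_poly_degree_leq)
  have "eval3 f x y z = poly P (sqrt (y\<^sup>2 + z\<^sup>2))"
    by (simp add: sor_eval_radius[OF sor] P_def eval2_as_poly)
  also have "\<dots> = (\<Sum>j\<le>n. coeff P j * sqrt (y\<^sup>2 + z\<^sup>2) ^ j)"
    by (rule poly_as_sum_upto[OF deg_P])
  also have "\<dots> = (\<Sum>i\<le>n. coeff P (2 * i) * ((sqrt (y\<^sup>2 + z\<^sup>2))\<^sup>2) ^ i)"
  proof (rule sum_even_powers)
    show "coeff P j = 0" if "odd j" for j
      using that by (simp add: P_def coeff_map_poly sor_profile_odd_coeff[OF sor])
    show "coeff P j = 0" if "j > n" for j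
      using that deg_P by (intro coeff_eq_0) simp
  qed
  also have "\<dots> = eval2 (profile_half f) x (y\<^sup>2 + z\<^sup>2)"
    by (simp add: eval2_profile_half n_def P_def coeff_map_poly add_nonneg_nonneg)
  finally show ?thesis .
qed

lemma sor_eq_radial:
  assumes "surface_of_revolution_x_axis f"
  shows "cpoly3 f = radial (cpoly2 (profile_half f))"
proof -
  have "f = radial (profile_half f)"
    by (rule poly3_eqI) (simp add: eval3_radial sor_eval_profile_half[OF assms])
  then show ?thesis by (metis cpoly3_radial)
qed

lemma sor_evalC:
  assumes "surface_of_revolution_x_axis f"
  shows "evalC f (x, y, z) = eval2 (cpoly2 (profile_half f)) x (y\<^sup>2 + z\<^sup>2)"
  by (simp add: evalC_def sor_eq_radial[OF assms] eval3_radial)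

text \<open>The profile curve is a genuine curve: since \<open>f\<close> depends on \<open>(y, z)\<close>, its halved
  profile is not constant in \<open>w\<close>.\<close>

lemma sor_profile_half_nonconst:
  assumes sor: "surface_of_revolution_x_axis f"
  shows "degree (cpoly2 (profile_half f)) > 0"
proof (rule ccontr)
  assume "\<not> ?thesis"
  then obtain c where c: "profile_half f = [:c:]"
    by (metis degree_eq_zeroE degree_map_poly cpoly1_eq_0_iff neq0_conv)
  from sor obtain x y z where "eval3 f x y z \<noteq> eval3 f x 0 0"
    unfolding surface_of_revolution_x_axis_def by blast
  then show False by (simp add: sor_eval_profile_half[OF sor] c eval2_def)
qed

lemma radial_unit_imp_unit:
  fixes A :: "complex poly poly"
  assumes "is_unit (radial A)"
  shows "is_unit A"
proof -
  from assms obtain c1 where c1: "radial A = [:c1:]" "is_unit c1" by (auto simp: is_unit_poly_iff)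
  from c1(2) obtain c2 where c2: "c1 = [:c2:]" "is_unit c2" by (auto simp: is_unit_poly_iff)
  from c2(2) obtain c where c: "c2 = [:c:]" "is_unit c" by (auto simp: is_unit_poly_iff)
  have "eval2 A x w = eval2 [:[:c:]:] x w" for x w
  proof -
    have "eval2 A x w = eval3 (radial A) x (csqrt w) 0" by (simp add: eval3_radial)
    also have "\<dots> = c" by (simp add: c1 c2 c eval3_def)
    finally show ?thesis by (simp add: eval2_def)
  qed
  then have "A = [:[:c:]:]" by (rule poly2_eqI)
  then show ?thesis using c(2) by (simp add: is_unit_poly_iff)
qed

text \<open>A factorization of \<open>P\<close> yields a factorization of \<open>f = P(x, y\<^sup>2 + z\<^sup>2)\<close>; hence the profile
  curve of an absolutely irreducible surface of revolution is irreducible over \<open>\<complex>\<close>.\<close>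

lemma sor_profile_half_irreducible:
  assumes sor: "surface_of_revolution_x_axis f" and irr: "absolutely_irreducible f"
  shows "irreducible (cpoly2 (profile_half f))" (is "irreducible ?P")
proof (rule irreducibleI)
  have irr_radial: "irreducible (radial ?P)"
    using irr sor_eq_radial[OF sor] by (simp add: absolutely_irreducible_def)
  show "?P \<noteq> 0"
    using irr_radial by (auto simp: radial_def)
  show "\<not> is_unit ?P"
  proof
    assume "is_unit ?P"
    then obtain v where "1 = ?P * v" by (auto elim: dvdE)
    then have "1 = radial ?P * radial v" by (metis radial_mult radial_one)
    then have "is_unit (radial ?P)" by (metis dvd_triv_left)
    with irr_radial show False by (simp add: irreducible_def)
  qed
  show "is_unit a \<or> is_unit b" if "?P = a * b" for a b
  proof -
    have "radial ?P = radial a * radial b" using that by (simp add: radial_mult)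
    with irr_radial have "is_unit (radial a) \<or> is_unit (radial b)" by (rule irreducibleD)
    then show ?thesis using radial_unit_imp_unit by blast
  qed
qed

text \<open>The rotation of a line \<open>w = 0\<close> of the profile plane is the reducible quadric cone
  \<open>c(x) (y + iz)(y - iz) = 0\<close>.\<close>

lemma radial_linear_reducible:
  fixes c :: "complex poly"
  assumes "c \<noteq> 0"
  shows "\<not> irreducible (radial [:0, c:])"
proof
  define L :: "complex poly poly poly" where "L = [:[:c:]:] * [: [:0, 1:], [:[:\<i>:]:] :]"
  define M :: "complex poly poly poly" where "M = [: [:0, 1:], [:[:-\<i>:]:] :]"
  have "radial [:0, c:] = L * M"
    by (rule poly3_eqI, simp only: eval3_radial)
       (simp add: L_def M_def eval2_def eval3_def algebra_simps power2_eq_square)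
  moreover assume "irreducible (radial [:0, c:])"
  ultimately have "is_unit L \<or> is_unit M" by (simp add: irreducible_def)
  moreover have "degree L = 1" unfolding L_def using assms by (subst degree_mult_eq) auto
  moreover have "degree M = 1" by (simp add: M_def)
  ultimately show False by (auto simp: is_unit_poly_iff)
qed

section \<open>Irreducible plane curves\<close>

text \<open>Bezout identity for an irreducible polynomial over a field and a non-multiple of it,
  via an element of least degree in the ideal they generate.\<close>

lemma field_poly_bezout:
  fixes a b :: "'k::field poly"
  assumes irr: "irreducible a" and not_dvd: "\<not> a dvd b"
  shows "\<exists>u v. u * a + v * b = 1"
proof -
  define I where "I = {u * a + v * b |u v. True}"
  have "a = 1 * a + 0 * b" "b = 0 * a + 1 * b" by simp_all
  then have a_in_I: "a \<in> I" and b_in_I: "b \<in> I" unfolding I_def by blast+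
  have "a \<noteq> 0" using irr by auto
  then obtain g where g: "g \<in> I" "g \<noteq> 0"
    and g_min: "\<And>p. p \<in> I \<Longrightarrow> p \<noteq> 0 \<Longrightarrow> degree g \<le> degree p"
    using ex_has_least_nat[of "\<lambda>p. p \<in> I \<and> p \<noteq> 0" a degree] a_in_I by blast
  have g_dvd: "g dvd p" if "p \<in> I" for p
  proof (rule ccontr)
    assume "\<not> g dvd p"
    then have m0: "p mod g \<noteq> 0" by (simp add: dvd_eq_mod_eq_0)
    from that g obtain u v u' v' where e: "p = u * a + v * b" "g = u' * a + v' * b"
      unfolding I_def by blast
    have "p mod g = p - p div g * g" by (simp add: minus_div_mult_eq_mod)
    also have "\<dots> = (u - p div g * u') * a + (v - p div g * v') * b"
      unfolding e by (simp add: algebra_simps)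
    finally have "p mod g \<in> I" unfolding I_def by blast
    then have "degree g \<le> degree (p mod g)" using g_min m0 by blast
    moreover have "degree (p mod g) < degree g" using degree_mod_less'[of g p] g m0 by blast
    ultimately show False by simp
  qed
  from g_dvd[OF a_in_I] obtain k where k: "a = g * k" by (auto elim: dvdE)
  have "is_unit g"
  proof (rule ccontr)
    assume "\<not> is_unit g"
    with irr k have "is_unit k" by (auto dest: irreducibleD)
    then have "a dvd g" using k by (simp add: mult_unit_dvd_iff')
    with g_dvd[OF b_in_I] not_dvd show False using dvd_trans by blast
  qed
  then obtain g' where g': "1 = g * g'" by (auto elim: dvdE)
  from g obtain u v where "g = u * a + v * b" unfolding I_def by blast
  then have "(g' * u) * a + (g' * v) * b = 1" using g' by (simp add: algebra_simps)
  then show ?thesis by blast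
qed

lemma fract_poly_clear_denominators:
  fixes u :: "'a::{factorial_ring_gcd,semiring_gcd_mult_normalize} fract poly"
  obtains U b where "b \<noteq> 0" "smult (to_fract b) u = fract_poly U"
proof -
  from content_decompose_fract[of u] obtain c U where u: "u = smult c (fract_poly U)" by metis
  define a where "a = fst (quot_of_fract c)"
  define b where "b = snd (quot_of_fract c)"
  have b0: "b \<noteq> 0" by (simp add: b_def)
  have c: "c = to_fract a / to_fract b"
    by (metis Fract_conv_to_fract Fract_quot_of_fract a_def b_def)
  have "smult (to_fract b) u = smult (to_fract b * c) (fract_poly U)" by (simp add: u)
  also have "to_fract b * c = to_fract a" using b0 by (simp add: c)
  also have "smult (to_fract a) (fract_poly U) = fract_poly (smult a U)" by simp
  finally show ?thesis using that b0 by blast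
qed

lemma irreducible_curve_vertical_line_finite:
  fixes F :: "complex poly poly"
  assumes irr: "irreducible F" and deg: "degree F > 0"
  shows "finite {w. eval2 F x0 w = 0}"
proof (rule ccontr)
  assume inf: "infinite {w. eval2 F x0 w = 0}"
  have "{w. eval2 F x0 w = 0} = {w. poly (map_poly (\<lambda>c. poly c x0) F) w = 0}"
    by (simp add: eval2_as_poly)
  then have "map_poly (\<lambda>c. poly c x0) F = 0" using inf poly_roots_finite by fastforce
  then have root: "poly (coeff F k) x0 = 0" for k by (metis coeff_0 coeff_map_poly poly_0)
  define l where "l = [:-x0, 1:]"
  have l_dvd: "l dvd coeff F k" for k using root[of k] by (simp add: l_def poly_eq_0_iff_dvd)
  define F' where "F' = map_poly (\<lambda>c. c div l) F"
  have "F = smult l F'"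
  proof (rule poly_eqI)
    show "coeff F k = coeff (smult l F') k" for k
      using l_dvd[of k] by (simp add: F'_def coeff_map_poly)
  qed
  then have F: "F = [:l:] * F'" by simp
  have "\<not> is_unit [:l:]" by (auto simp: is_unit_poly_iff l_def)
  moreover have "\<not> is_unit F'"
  proof
    assume "is_unit F'"
    then have "degree F' = 0" by (auto simp: is_unit_poly_iff)
    with \<open>F = smult l F'\<close> deg show False by (simp split: if_splits)
  qed
  ultimately show False using irreducibleD[OF irr F] by blast
qed

text \<open>If \<open>G\<close> vanishes on infinitely many points of an irreducible curve \<open>F = 0\<close>, then \<open>F\<close> divides \<open>G\<close>.
  Otherwise a Bezout identity \<open>U F + V G = c(x)\<close> would confine these points to finitely many
  vertical lines.\<close>

lemma irreducible_curve_dvd: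
  fixes F G :: "complex poly poly"
  assumes irr: "irreducible F" and deg: "degree F > 0" and inf: "infinite S"
    and vanish: "\<And>a b. (a, b) \<in> S \<Longrightarrow> eval2 F a b = 0 \<and> eval2 G a b = 0"
  shows "F dvd G"
proof (rule ccontr)
  assume not_dvd: "\<not> F dvd G"
  have "content F = 1" and irr_fract: "irreducible (fract_poly F)"
    using nonconst_poly_irreducible_iff[of F] deg irr by auto
  then have "\<not> fract_poly F dvd fract_poly G" using not_dvd fract_poly_dvdD by blast
  then obtain u v where uv: "u * fract_poly F + v * fract_poly G = 1"
    using field_poly_bezout[OF irr_fract] by blast
  obtain U b1 where U: "b1 \<noteq> 0" "smult (to_fract b1) u = fract_poly U"
    using fract_poly_clear_denominators by blast
  obtain V b2 where V: "b2 \<noteq> 0" "smult (to_fract b2) v = fract_poly V"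
    using fract_poly_clear_denominators by blast
  have "fract_poly (smult b2 U * F + smult b1 V * G)
      = smult (to_fract b2) (fract_poly U) * fract_poly F
        + smult (to_fract b1) (fract_poly V) * fract_poly G"
    by simp
  also have "\<dots> = smult (to_fract (b1 * b2)) (u * fract_poly F + v * fract_poly G)"
    by (simp only: U(2)[symmetric] V(2)[symmetric] smult_smult mult_smult_left smult_add_right
        to_fract_mult mult.commute[of "to_fract b2"])
  also have "\<dots> = fract_poly [:b1 * b2:]" using uv by (simp add: map_poly_pCons)
  finally have bezout: "smult b2 U * F + smult b1 V * G = [:b1 * b2:]"
    by (simp only: fract_poly_eq_iff)
  have on_lines: "poly (b1 * b2) a = 0" if "(a, b) \<in> S" for a b
  proof -
    have "eval2 (smult b2 U * F + smult b1 V * G) a b = 0"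
      using vanish[OF that] by (simp add: eval2_add eval2_mult eval2_smult del: mult_smult_left)
    then show ?thesis unfolding bezout by (simp add: eval2_def)
  qed
  have "S \<subseteq> (\<Union>a\<in>{a. poly (b1 * b2) a = 0}. {a} \<times> {w. eval2 F a w = 0})"
    using on_lines vanish by fastforce
  moreover have "finite {a. poly (b1 * b2) a = 0}" using U(1) V(1) by (simp add: poly_roots_finite)
  moreover have "finite {w. eval2 F a w = 0}" for a
    by (rule irreducible_curve_vertical_line_finite[OF irr deg])
  ultimately have "finite S" by (simp add: finite_subset)
  with inf show False by simp
qed

section \<open>Algebras of polynomial functions\<close>

text \<open>It is used to clear the denominator of the inverse parameter \<open>t = A/B\<close>.\<close>

definition homog :: "nat \<Rightarrow> real poly \<Rightarrow> complex \<Rightarrow> complex \<Rightarrow> complex" where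
  "homog N c a b = (\<Sum>i\<le>N. of_real (coeff c i) * a ^ i * b ^ (N - i))"

lemma homog_eval:
  assumes "degree c \<le> N"
  shows "homog N c (s * b) b = b ^ N * poly (cpoly1 c) s"
proof -
  have "poly (cpoly1 c) s = (\<Sum>i\<le>N. coeff (cpoly1 c) i * s ^ i)"
    by (rule poly_as_sum_upto) (use assms in \<open>simp add: degree_map_poly\<close>)
  then have "b ^ N * poly (cpoly1 c) s = (\<Sum>i\<le>N. of_real (coeff c i) * s ^ i * b ^ N)"
    by (simp add: sum_distrib_left coeff_map_poly mult_ac)
  also have "\<dots> = homog N c (s * b) b"
    unfolding homog_def
  proof (rule sum.cong)
    fix i assume "i \<in> {..N}"
    then have "b ^ N = b ^ i * b ^ (N - i)" by (simp add: power_add[symmetric])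
    then show "of_real (coeff c i) * s ^ i * b ^ N = of_real (coeff c i) * (s * b) ^ i * b ^ (N - i)"
      by (simp add: power_mult_distrib mult_ac)
  qed simp
  finally show ?thesis by simp
qed

text \<open>Three such
  classes are used below: polynomial functions on \<open>\<complex>\<^sup>3\<close> and on \<open>\<complex>\<^sup>2\<close>, and the rational
  functions of one variable whose denominator is a power of a fixed polynomial \<open>q\<close>.\<close>

locale function_algebra =
  fixes mem :: "('a \<Rightarrow> complex) \<Rightarrow> bool"
  assumes const: "mem (\<lambda>_. complex_of_real c)"
    and add: "mem f \<Longrightarrow> mem g \<Longrightarrow> mem (\<lambda>s. f s + g s)"
    and mult: "mem f \<Longrightarrow> mem g \<Longrightarrow> mem (\<lambda>s. f s * g s)"
begin

lemma diff:
  assumes "mem f" "mem g"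
  shows "mem (\<lambda>s. f s - g s)"
proof -
  have "mem (\<lambda>s. f s + of_real (-1) * g s)" by (intro add mult const assms)
  then show ?thesis by simp
qed

lemma power: "mem f \<Longrightarrow> mem (\<lambda>s. f s ^ n)"
  using const[of 1] by (induction n) (simp_all add: mult)

lemma sum: "(\<And>i. i \<in> I \<Longrightarrow> mem (f i)) \<Longrightarrow> mem (\<lambda>s. \<Sum>i\<in>I. f i s)"
  using const[of 0] by (induction I rule: infinite_finite_induct) (simp_all add: add)

lemma poly_comp: "mem f \<Longrightarrow> mem (\<lambda>s. poly (cpoly1 c) (f s))"
proof (induction c)
  case 0 then show ?case using const[of 0] by simp
next
  case (pCons a c)
  then have "mem (\<lambda>s. of_real a + f s * poly (cpoly1 c) (f s))"
    by (intro add mult const) auto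
  then show ?case by (simp add: map_poly_pCons)
qed

lemma eval2_comp: "mem f \<Longrightarrow> mem g \<Longrightarrow> mem (\<lambda>s. eval2 (cpoly2 G) (f s) (g s))"
proof (induction G)
  case 0 then show ?case using const[of 0] by (simp add: eval2_def)
next
  case (pCons a G)
  then have "mem (\<lambda>s. poly (cpoly1 a) (f s) + g s * eval2 (cpoly2 G) (f s) (g s))"
    by (intro add mult poly_comp) auto
  then show ?case by (simp add: eval2_cpoly2_pCons)
qed

lemma homog_comp: "mem f \<Longrightarrow> mem g \<Longrightarrow> mem (\<lambda>s. homog N c (f s) (g s))"
  unfolding homog_def by (intro sum mult const power)

end

definition poly_fun3 :: "(complex \<times> complex \<times> complex \<Rightarrow> complex) \<Rightarrow> bool" where
  "poly_fun3 \<phi> \<longleftrightarrow> (\<exists>N. \<forall>P. evalC N P = \<phi> P)"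

interpretation poly_fun3: function_algebra poly_fun3
proof
  show "poly_fun3 (\<lambda>_. complex_of_real c)" for c
    unfolding poly_fun3_def
    by (rule exI[of _ "[:[:[:c:]:]:]"])
       (simp add: evalC_def cpoly3_def eval3_def map_poly_pCons split: prod.splits)
  fix f g assume "poly_fun3 f" "poly_fun3 g"
  then obtain N M where N: "\<And>P. evalC N P = f P" and M: "\<And>P. evalC M P = g P"
    unfolding poly_fun3_def by blast
  have "evalC (N + M) P = f P + g P" for P
    using N[of P] M[of P] by (auto simp: evalC_def cpoly3_add eval3_add split: prod.splits)
  then show "poly_fun3 (\<lambda>P. f P + g P)" unfolding poly_fun3_def by blast
  have "evalC (N * M) P = f P * g P" for P
    using N[of P] M[of P] by (auto simp: evalC_def cpoly3_mult eval3_mult split: prod.splits)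
  then show "poly_fun3 (\<lambda>P. f P * g P)" unfolding poly_fun3_def by blast
qed

lemma poly_fun3_x: "poly_fun3 (\<lambda>P. fst P)"
  unfolding poly_fun3_def
  by (rule exI[of _ "[:[:[:0, 1:]:]:]"])
     (simp add: evalC_def cpoly3_def eval3_def map_poly_pCons split: prod.splits)

lemma poly_fun3_y: "poly_fun3 (\<lambda>P. fst (snd P))"
  unfolding poly_fun3_def
  by (rule exI[of _ "[:[:0, 1:]:]"])
     (simp add: evalC_def cpoly3_def eval3_def map_poly_pCons split: prod.splits)

lemma poly_fun3_z: "poly_fun3 (\<lambda>P. snd (snd P))"
  unfolding poly_fun3_def
  by (rule exI[of _ "[:0, 1:]"])
     (simp add: evalC_def cpoly3_def eval3_def map_poly_pCons split: prod.splits)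

lemma poly_fun3_ratmap:
  assumes "poly_fun3 n1" "poly_fun3 n2" "poly_fun3 n3" "poly_fun3 dn"
  obtains R :: ratmap3 where
    "\<And>P. rm_defined R P \<longleftrightarrow> dn P \<noteq> 0"
    "\<And>P. rm_eval R P = (n1 P / dn P, n2 P / dn P, n3 P / dn P)"
proof -
  from assms obtain N1 N2 N3 Dn where
    "\<And>P. evalC N1 P = n1 P" "\<And>P. evalC N2 P = n2 P" "\<And>P. evalC N3 P = n3 P" "\<And>P. evalC Dn P = dn P"
    unfolding poly_fun3_def by metis
  then show ?thesis by (intro that[of "(N1, N2, N3, Dn)"]) (simp_all add: rm_defined_def rm_eval_def)
qed

definition poly_fun2 :: "(complex \<times> complex \<Rightarrow> complex) \<Rightarrow> bool" where
  "poly_fun2 \<phi> \<longleftrightarrow> (\<exists>G :: complex poly poly. \<forall>x w. \<phi> (x, w) = eval2 G x w)"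

interpretation poly_fun2: function_algebra poly_fun2
proof
  show "poly_fun2 (\<lambda>_. complex_of_real c)" for c
    unfolding poly_fun2_def by (rule exI[of _ "[:[:of_real c:]:]"]) (simp add: eval2_def)
  show "poly_fun2 (\<lambda>P. f P + g P)" if "poly_fun2 f" "poly_fun2 g" for f g
    using that unfolding poly_fun2_def by (metis eval2_add)
  show "poly_fun2 (\<lambda>P. f P * g P)" if "poly_fun2 f" "poly_fun2 g" for f g
    using that unfolding poly_fun2_def by (metis eval2_mult)
qed

lemma poly_fun2_fst: "poly_fun2 fst"
  unfolding poly_fun2_def by (rule exI[of _ "[:[:0, 1:]:]"]) (simp add: eval2_def)

lemma poly_fun2_snd: "poly_fun2 snd"
  unfolding poly_fun2_def by (rule exI[of _ "[:0, 1:]"]) (simp add: eval2_def)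

definition q_fraction :: "real poly \<Rightarrow> (complex \<Rightarrow> complex) \<Rightarrow> bool" where
  "q_fraction q \<phi> \<longleftrightarrow>
     (\<exists>m P. \<forall>s. poly (cpoly1 q) s \<noteq> 0 \<longrightarrow> poly (cpoly1 q) s ^ m * \<phi> s = poly (cpoly1 P) s)"

interpretation q_fraction: function_algebra "q_fraction q" for q
proof
  show "q_fraction q (\<lambda>_. complex_of_real c)" for c
    unfolding q_fraction_def by (rule exI[of _ 0], rule exI[of _ "[:c:]"]) (simp add: map_poly_pCons)
  fix f g assume "q_fraction q f" "q_fraction q g"
  then obtain m1 P1 m2 P2 where
    f: "\<And>s. poly (cpoly1 q) s \<noteq> 0 \<Longrightarrow> poly (cpoly1 q) s ^ m1 * f s = poly (cpoly1 P1) s" and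
    g: "\<And>s. poly (cpoly1 q) s \<noteq> 0 \<Longrightarrow> poly (cpoly1 q) s ^ m2 * g s = poly (cpoly1 P2) s"
    unfolding q_fraction_def by blast
  have "poly (cpoly1 q) s ^ (m1 + m2) * (f s + g s) = poly (cpoly1 (q ^ m2 * P1 + q ^ m1 * P2)) s"
    if "poly (cpoly1 q) s \<noteq> 0" for s
  proof -
    have "poly (cpoly1 q) s ^ (m1 + m2) * (f s + g s) =
      poly (cpoly1 q) s ^ m2 * (poly (cpoly1 q) s ^ m1 * f s)
        + poly (cpoly1 q) s ^ m1 * (poly (cpoly1 q) s ^ m2 * g s)"
      by (simp add: power_add algebra_simps)
    then show ?thesis using f g that by (simp add: cpoly1_add cpoly1_mult cpoly1_power)
  qed
  then show "q_fraction q (\<lambda>s. f s + g s)" unfolding q_fraction_def by blast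
  have "poly (cpoly1 q) s ^ (m1 + m2) * (f s * g s) = poly (cpoly1 (P1 * P2)) s"
    if "poly (cpoly1 q) s \<noteq> 0" for s
  proof -
    have "poly (cpoly1 q) s ^ (m1 + m2) * (f s * g s) =
      (poly (cpoly1 q) s ^ m1 * f s) * (poly (cpoly1 q) s ^ m2 * g s)"
      by (simp add: power_add algebra_simps)
    then show ?thesis using f g that by (simp add: cpoly1_mult)
  qed
  then show "q_fraction q (\<lambda>s. f s * g s)" unfolding q_fraction_def by blast
qed

lemma q_fraction_id: "q_fraction q (\<lambda>s. s)"
  unfolding q_fraction_def by (rule exI[of _ 0], rule exI[of _ "[:0, 1:]"]) (simp add: map_poly_pCons)

lemma q_fraction_div_q: "q_fraction q (\<lambda>s. poly (cpoly1 c) s / poly (cpoly1 q) s)"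
  unfolding q_fraction_def by (rule exI[of _ 1], rule exI[of _ c]) simp

lemma q_fraction_eq_0:
  assumes "q_fraction q f" and inf: "infinite {t::real. poly q t \<noteq> 0 \<and> f (of_real t) = 0}"
    and s: "poly (cpoly1 q) s \<noteq> 0"
  shows "f s = 0"
proof -
  from assms(1) obtain m P where mP:
    "\<And>s. poly (cpoly1 q) s \<noteq> 0 \<Longrightarrow> poly (cpoly1 q) s ^ m * f s = poly (cpoly1 P) s"
    unfolding q_fraction_def by blast
  have "{t::real. poly q t \<noteq> 0 \<and> f (of_real t) = 0} \<subseteq> {t. poly P t = 0}"
  proof safe
    fix t assume t: "poly q t \<noteq> 0" "f (of_real t) = 0"
    then have "poly (cpoly1 q) (of_real t) \<noteq> 0" by (simp add: poly_cpoly1_of_real)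
    from mP[OF this] t(2) show "poly P t = 0" by (simp add: poly_cpoly1_of_real)
  qed
  then have "P = 0" using inf poly_roots_finite finite_subset by blast
  then show ?thesis using mP[OF s] s by simp
qed

lemma q_fraction_nonzero:
  assumes "q_fraction q f" and "poly (cpoly1 q) s0 \<noteq> 0" "f s0 \<noteq> 0"
  obtains R where "R \<noteq> 0" "\<And>s. poly (cpoly1 R) s \<noteq> 0 \<Longrightarrow> poly (cpoly1 q) s \<noteq> 0 \<and> f s \<noteq> 0"
proof -
  from assms(1) obtain m P where mP:
    "\<And>s. poly (cpoly1 q) s \<noteq> 0 \<Longrightarrow> poly (cpoly1 q) s ^ m * f s = poly (cpoly1 P) s"
    unfolding q_fraction_def by blast
  have "poly (cpoly1 (q * P)) s0 \<noteq> 0"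
    using assms(2,3) mP[OF assms(2)] by (simp add: cpoly1_mult) (metis mult_eq_0_iff power_not_zero)
  then have "q * P \<noteq> 0" by auto
  moreover have "poly (cpoly1 q) s \<noteq> 0 \<and> f s \<noteq> 0" if "poly (cpoly1 (q * P)) s \<noteq> 0" for s
    using that mP by (simp add: cpoly1_mult) (metis mult_zero_right)
  ultimately show ?thesis using that by blast
qed

section \<open>A proper parameterization of the profile curve\<close>

locale profile_parametrization =
  fixes f :: "real poly poly poly" and p q r :: "real poly" and A B :: "real poly poly" and t0 :: real
  assumes sor: "surface_of_revolution_x_axis f"
    and irr: "absolutely_irreducible f"
    and q_nz: "q \<noteq> 0"
    and on_curve_real: "\<And>t. poly q t \<noteq> 0 \<Longrightarrow>
          eval2 (profile_half f) (poly p t / poly q t) (poly r t / poly q t) = 0"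
    and t0: "poly q t0 \<noteq> 0" "eval2 B (poly p t0 / poly q t0) (poly r t0 / poly q t0) \<noteq> 0"
    and inverse_real: "\<And>t. poly q t \<noteq> 0 \<Longrightarrow> eval2 B (poly p t / poly q t) (poly r t / poly q t) \<noteq> 0 \<Longrightarrow>
          eval2 A (poly p t / poly q t) (poly r t / poly q t) /
          eval2 B (poly p t / poly q t) (poly r t / poly q t) = t"
begin

definition "curve = cpoly2 (profile_half f)"
definition "X s = poly (cpoly1 p) s / poly (cpoly1 q) s"
definition "W s = poly (cpoly1 r) s / poly (cpoly1 q) s"
definition "A_at s = eval2 (cpoly2 A) (X s) (W s)"
definition "B_at s = eval2 (cpoly2 B) (X s) (W s)"

definition "good = {s. poly (cpoly1 q) s \<noteq> 0 \<and> B_at s \<noteq> 0}"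

lemma curve_irreducible: "irreducible curve"
  unfolding curve_def by (rule sor_profile_half_irreducible[OF sor irr])

lemma curve_nonconst: "degree curve > 0"
  unfolding curve_def by (rule sor_profile_half_nonconst[OF sor])

lemma evalC_f: "evalC f (x, y, z) = eval2 curve x (y\<^sup>2 + z\<^sup>2)"
  unfolding curve_def by (rule sor_evalC[OF sor])

lemma eval2_param_of_real:
  "eval2 (cpoly2 G) (X (of_real t)) (W (of_real t))
     = of_real (eval2 G (poly p t / poly q t) (poly r t / poly q t))"
proof -
  have "X (of_real t) = of_real (poly p t / poly q t)" "W (of_real t) = of_real (poly r t / poly q t)"
    by (simp_all add: X_def W_def poly_cpoly1_of_real)
  then show ?thesis by (simp only: eval2_cpoly2_of_real)
qed

lemma q_fraction_eval2_param: "q_fraction q (\<lambda>s. eval2 (cpoly2 G) (X s) (W s))"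
  unfolding X_def W_def by (intro q_fraction.eval2_comp q_fraction_div_q)

text \<open>By the identity principle the complexified parameterization still lies on the curve.\<close>

lemma param_on_curve:
  assumes "poly (cpoly1 q) s \<noteq> 0"
  shows "eval2 curve (X s) (W s) = 0"
proof (rule q_fraction_eq_0[OF _ _ assms])
  show "q_fraction q (\<lambda>s. eval2 curve (X s) (W s))"
    unfolding curve_def by (rule q_fraction_eval2_param)
  have "{t. poly q t \<noteq> 0} \<subseteq> {t. poly q t \<noteq> 0 \<and> eval2 curve (X (of_real t)) (W (of_real t)) = 0}"
    using on_curve_real by (auto simp: curve_def eval2_param_of_real)
  then show "infinite {t. poly q t \<noteq> 0 \<and> eval2 curve (X (of_real t)) (W (of_real t)) = 0}"
    using infinite_nonroots[OF q_nz] finite_subset by blast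
qed

lemma good_nonroots:
  obtains R where "R \<noteq> 0" "\<And>s. poly (cpoly1 R) s \<noteq> 0 \<Longrightarrow> s \<in> good"
proof -
  have "poly (cpoly1 q) (of_real t0) \<noteq> 0" "B_at (of_real t0) \<noteq> 0"
    using t0 by (simp_all add: poly_cpoly1_of_real B_at_def eval2_param_of_real)
  with q_fraction_eval2_param obtain R where
    "R \<noteq> 0" "\<And>s. poly (cpoly1 R) s \<noteq> 0 \<Longrightarrow> poly (cpoly1 q) s \<noteq> 0 \<and> B_at s \<noteq> 0"
    unfolding B_at_def by (rule q_fraction_nonzero) blast
  then show ?thesis using that by (auto simp: good_def)
qed

lemma infinite_good: "infinite good"
proof -
  obtain R where "R \<noteq> 0" "\<And>s. poly (cpoly1 R) s \<noteq> 0 \<Longrightarrow> s \<in> good"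
    by (rule good_nonroots) blast
  then have "{s. poly (cpoly1 R) s \<noteq> 0} \<subseteq> good" by blast
  moreover have "infinite {s. poly (cpoly1 R) s \<noteq> 0}" using \<open>R \<noteq> 0\<close> by (intro infinite_nonroots) simp
  ultimately show ?thesis using finite_subset by blast
qed

lemma param_inverse:
  assumes "s \<in> good"
  shows "A_at s = s * B_at s"
proof -
  obtain R where R: "R \<noteq> 0" "\<And>s. poly (cpoly1 R) s \<noteq> 0 \<Longrightarrow> s \<in> good"
    by (rule good_nonroots) blast
  have "A_at s - s * B_at s = 0"
  proof (rule q_fraction_eq_0[where f = "\<lambda>s. A_at s - s * B_at s"])
    show "q_fraction q (\<lambda>s. A_at s - s * B_at s)" unfolding A_at_def B_at_def
      by (intro q_fraction.diff q_fraction.mult q_fraction_id q_fraction_eval2_param)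
    have "{t. poly R t \<noteq> 0} \<subseteq> {t. poly q t \<noteq> 0 \<and> A_at (of_real t) - of_real t * B_at (of_real t) = 0}"
    proof safe
      fix t assume "poly R t \<noteq> 0"
      then have "of_real t \<in> good" using R(2) by (simp add: poly_cpoly1_of_real)
      then have q: "poly q t \<noteq> 0" and "eval2 B (poly p t / poly q t) (poly r t / poly q t) \<noteq> 0"
        by (simp_all add: good_def poly_cpoly1_of_real B_at_def eval2_param_of_real)
      with inverse_real[OF q] have "eval2 A (poly p t / poly q t) (poly r t / poly q t)
          = t * eval2 B (poly p t / poly q t) (poly r t / poly q t)"
        by (auto simp: field_simps)
      then show "A_at (of_real t) - of_real t * B_at (of_real t) = 0"
        by (simp add: A_at_def B_at_def eval2_param_of_real)
      show "poly q t = 0 \<Longrightarrow> False" using q by simp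
    qed
    then show "infinite {t. poly q t \<noteq> 0 \<and> A_at (of_real t) - of_real t * B_at (of_real t) = 0}"
      using infinite_nonroots[OF R(1)] finite_subset by blast
    show "poly (cpoly1 q) s \<noteq> 0" using assms by (simp add: good_def)
  qed
  then show ?thesis by simp
qed

text \<open>Since the parameterization is injective on good parameters, it covers infinitely many
  points of the irreducible curve; so a polynomial vanishing along it is a multiple of the curve.\<close>

lemma curve_dvd:
  assumes "\<And>s. s \<in> good \<Longrightarrow> eval2 G (X s) (W s) = 0"
  shows "curve dvd G"
proof (rule irreducible_curve_dvd[OF curve_irreducible curve_nonconst])
  have "inj_on (\<lambda>s. (X s, W s)) good"
  proof (rule inj_onI)
    fix s1 s2 assume s: "s1 \<in> good" "s2 \<in> good" "(X s1, W s1) = (X s2, W s2)"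
    then have "A_at s1 / B_at s1 = A_at s2 / B_at s2" by (simp add: A_at_def B_at_def)
    then show "s1 = s2" using s(1,2) param_inverse by (simp add: good_def)
  qed
  then show "infinite ((\<lambda>s. (X s, W s)) ` good)" using infinite_good finite_imageD by blast
  show "eval2 curve a b = 0 \<and> eval2 G a b = 0" if "(a, b) \<in> (\<lambda>s. (X s, W s)) ` good" for a b
  proof -
    from that obtain s where "s \<in> good" "a = X s" "b = W s" by blast
    then show ?thesis using assms param_on_curve by (simp add: good_def)
  qed
qed

lemma curve_vanish:
  assumes "poly_fun2 \<phi>" "\<And>s. s \<in> good \<Longrightarrow> \<phi> (X s, W s) = 0" and "eval2 curve x w = 0"
  shows "\<phi> (x, w) = 0"
proof -
  from assms(1) obtain G where G: "\<And>x w. \<phi> (x, w) = eval2 G x w" unfolding poly_fun2_def by blast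
  have "curve dvd G" using assms(2) by (intro curve_dvd) (simp add: G[symmetric])
  then obtain K where "G = curve * K" by (auto elim: dvdE)
  then show ?thesis using assms(3) by (simp add: G eval2_mult)
qed

text \<open>The profile curve is not the axis \<open>w = 0\<close>: otherwise \<open>f\<close> would be a reducible cone
  (lemma \<open>radial_linear_reducible\<close>).\<close>

lemma r_nz: "r \<noteq> 0"
proof
  assume r0: "r = 0"
  have "W s = 0" for s unfolding W_def by (simp add: r0)
  then have "curve dvd [:0, 1:]" by (intro curve_dvd) (simp add: eval2_def)
  then obtain u where u: "[:0, 1:] = curve * u" by (auto elim: dvdE)
  then have u_nz: "u \<noteq> 0" by auto
  have "curve \<noteq> 0" using curve_nonconst by auto
  have "degree (curve * u) = 1" by (simp flip: u)
  then have "degree curve + degree u = 1" by (simp add: degree_mult_eq[OF \<open>curve \<noteq> 0\<close> u_nz])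
  then have deg: "degree curve = 1" "degree u = 0" using curve_nonconst by auto
  then obtain c where c: "u = [:c:]" by (metis degree_eq_zeroE)
  have "coeff curve 0 * c = 0" using arg_cong[OF u, of "\<lambda>P. coeff P 0"] by (auto simp: c)
  then have "coeff curve 0 = 0" using u_nz c by auto
  then have linear: "curve = [:0, coeff curve 1:]"
    using deg(1) by (intro poly_eqI) (auto simp: coeff_pCons coeff_eq_0 split: nat.splits)
  have "coeff curve 1 \<noteq> 0" using deg(1) \<open>curve \<noteq> 0\<close> by (metis leading_coeff_0_iff)
  then have "\<not> irreducible (radial curve)" by (subst linear) (rule radial_linear_reducible)
  moreover have "cpoly3 f = radial curve" unfolding curve_def by (rule sor_eq_radial[OF sor])
  ultimately show False using irr by (simp add: absolutely_irreducible_def)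
qed

end

definition ratmap_left_inverse ::
  "(complex \<times> complex \<times> complex) set \<Rightarrow> (complex \<times> complex \<times> complex) set \<Rightarrow>
   ratmap3 \<Rightarrow> ratmap3 \<Rightarrow> real poly poly poly \<Rightarrow> bool" where
  "ratmap_left_inverse V W R\<phi> R\<psi> D \<longleftrightarrow>
     (\<exists>P\<in>V. evalC D P \<noteq> 0) \<and>
     (\<forall>P\<in>V. evalC D P \<noteq> 0 \<longrightarrow>
        rm_defined R\<phi> P \<and> rm_eval R\<phi> P \<in> W \<and>
        rm_defined R\<psi> (rm_eval R\<phi> P) \<and> rm_eval R\<psi> (rm_eval R\<phi> P) = P)"

lemma birational_mapI:
  assumes "ratmap_left_inverse V W R\<phi> R\<psi> D" "ratmap_left_inverse W V R\<psi> R\<phi> E"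
    and "\<And>P. rm_defined R\<phi> P \<Longrightarrow> \<phi> P = rm_eval R\<phi> P"
  shows "birational_map V W \<phi>"
  unfolding birational_map_def
  by (rule exI[of _ R\<phi>], rule exI[of _ R\<psi>], rule exI[of _ D], rule exI[of _ E])
     (use assms in \<open>auto simp: ratmap_left_inverse_def\<close>)

section \<open>The tubular surface\<close>

text \<open>With \<open>g = gcd(r, q)\<close>, \<open>q = g q~\<close>, \<open>r = g r~\<close> and \<open>r~ q~ = h d\<^sup>2\<close>, the point
  \<open>(x, y, z)\<close> of the tube \<open>y\<^sup>2 + z\<^sup>2 = h(x)\<close> is sent to the point of the surface with parameter \<open>x\<close>:
  its distance to the axis satisfies \<open>(d y/q~)\<^sup>2 + (d z/q~)\<^sup>2 = d\<^sup>2 h / q~\<^sup>2 = r/q\<close>.\<close>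

locale tube_parametrization = profile_parametrization +
  fixes h d :: "real poly"
  assumes factorization: "(r div gcd r q) * (q div gcd r q) = h * d\<^sup>2"
begin

definition "g = gcd r q"
definition "q_tilde = q div g"
definition "r_tilde = r div g"

lemma q_eq: "q = g * q_tilde" unfolding q_tilde_def g_def by simp
lemma r_eq: "r = g * r_tilde" unfolding r_tilde_def g_def by simp
lemma q_tilde_nz: "q_tilde \<noteq> 0" using q_nz q_eq by auto

lemma factorization_tilde: "r_tilde * q_tilde = h * d\<^sup>2"
  using factorization by (simp add: r_tilde_def q_tilde_def g_def)

lemma d_nz: "d \<noteq> 0"
proof
  assume "d = 0"
  then have "r_tilde = 0" using factorization_tilde q_tilde_nz by simp
  then show False using r_nz r_eq by simp
qed

lemma poly_cpoly1_q: "poly (cpoly1 q) s = poly (cpoly1 g) s * poly (cpoly1 q_tilde) s"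
  by (subst q_eq) (simp add: cpoly1_mult)

lemma poly_cpoly1_r: "poly (cpoly1 r) s = poly (cpoly1 g) s * poly (cpoly1 r_tilde) s"
  by (subst r_eq) (simp add: cpoly1_mult)

lemma poly_cpoly1_factorization:
  "poly (cpoly1 r_tilde) s * poly (cpoly1 q_tilde) s = poly (cpoly1 h) s * poly (cpoly1 d) s ^ 2"
proof -
  have "poly (cpoly1 (r_tilde * q_tilde)) s = poly (cpoly1 (h * d\<^sup>2)) s"
    by (simp only: factorization_tilde)
  then show ?thesis by (simp only: cpoly1_mult cpoly1_power poly_mult poly_power)
qed

definition "N = degree p + degree q + degree r + degree d + degree q_tilde"

lemma homog_N: "c \<in> {p, q, r, d, q_tilde} \<Longrightarrow> homog N c (s * b) b = b ^ N * poly (cpoly1 c) s"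
  by (rule homog_eval) (auto simp: N_def)

definition "A_on P = eval2 (cpoly2 A) (fst P) (snd P)"
definition "B_on P = eval2 (cpoly2 B) (fst P) (snd P)"

lemma poly_fun2_A_on: "poly_fun2 A_on"
  unfolding A_on_def by (intro poly_fun2.eval2_comp poly_fun2_fst poly_fun2_snd)

lemma poly_fun2_B_on: "poly_fun2 B_on"
  unfolding B_on_def by (intro poly_fun2.eval2_comp poly_fun2_fst poly_fun2_snd)

text \<open>On the curve, the parameterization composed with its inverse is the identity:
  a coordinate \<open>u = c/q\<close> of the parameterization equals \<open>c(A/B)/q(A/B)\<close>, in homogenized form.\<close>

lemma curve_homog_identity:
  assumes "poly_fun2 u" "c \<in> {p, r}"
    and param: "\<And>s. s \<in> good \<Longrightarrow> u (X s, W s) * poly (cpoly1 q) s = poly (cpoly1 c) s"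
    and on_curve: "eval2 curve x w = 0"
  shows "u (x, w) * homog N q (A_on (x, w)) (B_on (x, w)) = homog N c (A_on (x, w)) (B_on (x, w))"
proof -
  have "u (x, w) * homog N q (A_on (x, w)) (B_on (x, w)) - homog N c (A_on (x, w)) (B_on (x, w)) = 0"
  proof (rule curve_vanish[where \<phi> = "\<lambda>P. u P * homog N q (A_on P) (B_on P) - homog N c (A_on P) (B_on P)"])
    show "poly_fun2 (\<lambda>P. u P * homog N q (A_on P) (B_on P) - homog N c (A_on P) (B_on P))"
      by (intro poly_fun2.diff poly_fun2.mult poly_fun2.homog_comp assms(1) poly_fun2_A_on poly_fun2_B_on)
    fix s assume s: "s \<in> good"
    have homog_c: "homog N c (s * b) b = b ^ N * poly (cpoly1 c) s" for b
      using assms(2) by (auto intro: homog_N)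
    have "A_on (X s, W s) = s * B_on (X s, W s)"
      using param_inverse[OF s] by (simp add: A_on_def B_on_def A_at_def B_at_def)
    then show "u (X s, W s) * homog N q (A_on (X s, W s)) (B_on (X s, W s))
        - homog N c (A_on (X s, W s)) (B_on (X s, W s)) = 0"
      using param[OF s] by (simp add: homog_N homog_c)
  qed (rule on_curve)
  then show ?thesis by simp
qed

lemma curve_homog_x:
  "eval2 curve x w = 0 \<Longrightarrow> x * homog N q (A_on (x, w)) (B_on (x, w)) = homog N p (A_on (x, w)) (B_on (x, w))"
  using curve_homog_identity[of fst p] poly_fun2_fst by (simp add: X_def good_def)

lemma curve_homog_w:
  "eval2 curve x w = 0 \<Longrightarrow> w * homog N q (A_on (x, w)) (B_on (x, w)) = homog N r (A_on (x, w)) (B_on (x, w))"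
  using curve_homog_identity[of snd r] poly_fun2_snd by (simp add: W_def good_def)

text \<open>The map \<open>\<tau>\<close> of the theorem, and its inverse \<open>(X, Y, Z) \<mapsto> (t, Y q~(t)/d(t), Z q~(t)/d(t))\<close>
  where \<open>t = A/B\<close> is the parameter of the profile point \<open>(X, Y\<^sup>2 + Z\<^sup>2)\<close>; the inverse is written
  with all denominators cleared by homogenization.\<close>

definition "tube_map = (\<lambda>(x, y, z).
              let g = map_poly complex_of_real (gcd r q);
                  pt = poly (map_poly complex_of_real p) x / poly g x;
                  qt = poly (map_poly complex_of_real (q div gcd r q)) x;
                  dx = poly (map_poly complex_of_real d) x
              in (pt / qt, dx * y / qt, dx * z / qt))"

definition "A3 P = A_on (fst P, (fst (snd P))\<^sup>2 + (snd (snd P))\<^sup>2)"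
definition "B3 P = B_on (fst P, (fst (snd P))\<^sup>2 + (snd (snd P))\<^sup>2)"
definition "d_hom P = homog N d (A3 P) (B3 P)"
definition "q_hom P = homog N q (A3 P) (B3 P)"
definition "q_tilde_hom P = homog N q_tilde (A3 P) (B3 P)"

definition "inverse_map P =
   (A3 P * d_hom P / (B3 P * d_hom P),
    fst (snd P) * q_tilde_hom P * B3 P / (B3 P * d_hom P),
    snd (snd P) * q_tilde_hom P * B3 P / (B3 P * d_hom P))"

lemma tube_map_eq:
  "tube_map (x, y, z) =
     (poly (cpoly1 p) x / poly (cpoly1 g) x / poly (cpoly1 q_tilde) x,
      poly (cpoly1 d) x * y / poly (cpoly1 q_tilde) x, poly (cpoly1 d) x * z / poly (cpoly1 q_tilde) x)"
  by (simp add: tube_map_def g_def q_tilde_def Let_def)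

lemma tube_map_ratmap_form:
  assumes "poly (cpoly1 q) x \<noteq> 0"
  shows "tube_map (x, y, z) =
     (poly (cpoly1 p) x / poly (cpoly1 q) x,
      poly (cpoly1 d) x * y * poly (cpoly1 g) x / poly (cpoly1 q) x,
      poly (cpoly1 d) x * z * poly (cpoly1 g) x / poly (cpoly1 q) x)"
proof -
  have "poly (cpoly1 g) x \<noteq> 0" "poly (cpoly1 q_tilde) x \<noteq> 0" using assms poly_cpoly1_q by auto
  then show ?thesis using assms by (simp add: tube_map_eq poly_cpoly1_q field_simps)
qed

lemma tube_to_surface:
  assumes tube: "(x, y, z) \<in> tube h" and x: "x \<in> good" "poly (cpoly1 d) x \<noteq> 0"
  shows "tube_map (x, y, z) \<in> zero_set f" "B3 (tube_map (x, y, z)) * d_hom (tube_map (x, y, z)) \<noteq> 0"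
    "inverse_map (tube_map (x, y, z)) = (x, y, z)"
proof -
  have h: "y\<^sup>2 + z\<^sup>2 = poly (cpoly1 h) x" using tube by (simp add: tube_def)
  have qx: "poly (cpoly1 q) x \<noteq> 0" using x by (simp add: good_def)
  have gx: "poly (cpoly1 g) x \<noteq> 0" and qtx: "poly (cpoly1 q_tilde) x \<noteq> 0"
    using qx poly_cpoly1_q by auto
  define Y where "Y = poly (cpoly1 d) x * y / poly (cpoly1 q_tilde) x"
  define Z where "Z = poly (cpoly1 d) x * z / poly (cpoly1 q_tilde) x"
  have tau: "tube_map (x, y, z) = (X x, Y, Z)"
    by (simp add: tube_map_eq Y_def Z_def X_def poly_cpoly1_q)
  have radius: "Y\<^sup>2 + Z\<^sup>2 = W x"
  proof -
    have "Y\<^sup>2 + Z\<^sup>2 = poly (cpoly1 d) x ^ 2 * (y\<^sup>2 + z\<^sup>2) / poly (cpoly1 q_tilde) x ^ 2"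
      by (simp add: Y_def Z_def power_divide power_mult_distrib add_divide_distrib algebra_simps)
    also have "\<dots> = poly (cpoly1 d) x ^ 2 * poly (cpoly1 h) x / poly (cpoly1 q_tilde) x ^ 2"
      by (simp only: h)
    also have "\<dots> = poly (cpoly1 r_tilde) x / poly (cpoly1 q_tilde) x"
      using poly_cpoly1_factorization[of x] qtx by (simp add: field_simps power2_eq_square)
    also have "\<dots> = W x" using gx by (simp add: W_def poly_cpoly1_q poly_cpoly1_r)
    finally show ?thesis .
  qed
  show "tube_map (x, y, z) \<in> zero_set f"
    using param_on_curve[OF qx] by (simp add: zero_set_def tau evalC_f radius)
  have A3: "A3 (tube_map (x, y, z)) = x * B_at x" and B3: "B3 (tube_map (x, y, z)) = B_at x"
    using param_inverse[OF x(1)]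
    by (simp_all add: tau A3_def B3_def radius A_on_def B_on_def A_at_def B_at_def)
  have B_nz: "B_at x \<noteq> 0" using x by (simp add: good_def)
  have d_hom: "d_hom (tube_map (x, y, z)) = B_at x ^ N * poly (cpoly1 d) x"
    by (simp add: d_hom_def A3 B3 homog_N)
  have q_tilde_hom: "q_tilde_hom (tube_map (x, y, z)) = B_at x ^ N * poly (cpoly1 q_tilde) x"
    by (simp add: q_tilde_hom_def A3 B3 homog_N)
  show "B3 (tube_map (x, y, z)) * d_hom (tube_map (x, y, z)) \<noteq> 0"
    using B_nz x(2) by (simp add: B3 d_hom)
  show "inverse_map (tube_map (x, y, z)) = (x, y, z)"
    unfolding inverse_map_def using B_nz x(2) qtx
    by (simp add: A3 B3 d_hom q_tilde_hom) (simp add: tau Y_def Z_def field_simps)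
qed

text \<open>Here the identities \<open>X = p(t)/q(t)\<close> and
  \<open>Y\<^sup>2 + Z\<^sup>2 = r(t)/q(t)\<close> come from the curve identities for the inverse parameter.\<close>

lemma surface_to_tube:
  assumes surf: "(X0, Y0, Z0) \<in> zero_set f"
    and nz: "B3 (X0, Y0, Z0) * d_hom (X0, Y0, Z0) * q_hom (X0, Y0, Z0) \<noteq> 0"
  shows "inverse_map (X0, Y0, Z0) \<in> tube h" "poly (cpoly1 q) (fst (inverse_map (X0, Y0, Z0))) \<noteq> 0"
    "tube_map (inverse_map (X0, Y0, Z0)) = (X0, Y0, Z0)"
proof -
  define w where "w = Y0\<^sup>2 + Z0\<^sup>2"
  have on_curve: "eval2 curve X0 w = 0" using surf by (simp add: zero_set_def evalC_f w_def)
  define a where "a = A_on (X0, w)"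
  define b where "b = B_on (X0, w)"
  have A3: "A3 (X0, Y0, Z0) = a" and B3: "B3 (X0, Y0, Z0) = b"
    by (simp_all add: A3_def B3_def a_def b_def w_def)
  define t where "t = a / b"
  have b_nz: "b \<noteq> 0" and bN_nz: "b ^ N \<noteq> 0" using nz by (simp_all add: B3)
  have a: "a = t * b" using b_nz by (simp add: t_def)
  have homog: "homog N c a b = b ^ N * poly (cpoly1 c) t" if "c \<in> {p, q, r, d, q_tilde}" for c
    using homog_N[OF that, of t b] by (simp add: a)
  have dt: "poly (cpoly1 d) t \<noteq> 0" and qt: "poly (cpoly1 q) t \<noteq> 0"
    using nz by (simp_all add: d_hom_def q_hom_def A3 B3 homog)
  have gt: "poly (cpoly1 g) t \<noteq> 0" and qtt: "poly (cpoly1 q_tilde) t \<noteq> 0"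
    using qt poly_cpoly1_q by auto
  have "X0 * (b ^ N * poly (cpoly1 q) t) = b ^ N * poly (cpoly1 p) t"
    using curve_homog_x[OF on_curve] by (simp add: homog flip: a_def b_def)
  then have X0: "X0 = poly (cpoly1 p) t / poly (cpoly1 q) t" using b_nz bN_nz qt by (simp add: field_simps)
  have "w * (b ^ N * poly (cpoly1 q) t) = b ^ N * poly (cpoly1 r) t"
    using curve_homog_w[OF on_curve] by (simp add: homog flip: a_def b_def)
  then have w: "w = poly (cpoly1 r_tilde) t / poly (cpoly1 q_tilde) t"
    using b_nz bN_nz qt gt by (simp add: field_simps poly_cpoly1_q poly_cpoly1_r)
  have psi: "inverse_map (X0, Y0, Z0) =
      (t, Y0 * poly (cpoly1 q_tilde) t / poly (cpoly1 d) t, Z0 * poly (cpoly1 q_tilde) t / poly (cpoly1 d) t)"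
    unfolding inverse_map_def d_hom_def q_tilde_hom_def A3 B3 using b_nz bN_nz dt
    by (simp add: homog t_def field_simps)
  show "poly (cpoly1 q) (fst (inverse_map (X0, Y0, Z0))) \<noteq> 0" using qt by (simp add: psi)
  have "(Y0 * poly (cpoly1 q_tilde) t / poly (cpoly1 d) t)\<^sup>2 + (Z0 * poly (cpoly1 q_tilde) t / poly (cpoly1 d) t)\<^sup>2
      = w * poly (cpoly1 q_tilde) t ^ 2 / poly (cpoly1 d) t ^ 2"
    by (simp add: w_def power_divide power_mult_distrib algebra_simps add_divide_distrib)
  also have "\<dots> = poly (cpoly1 r_tilde) t * poly (cpoly1 q_tilde) t / poly (cpoly1 d) t ^ 2"
    using qtt by (simp add: w power2_eq_square)
  also have "\<dots> = poly (cpoly1 h) t" using dt by (simp add: poly_cpoly1_factorization)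
  finally show "inverse_map (X0, Y0, Z0) \<in> tube h" by (simp add: tube_def psi)
  show "tube_map (inverse_map (X0, Y0, Z0)) = (X0, Y0, Z0)"
    unfolding psi tube_map_eq using dt qtt gt by (simp add: X0 poly_cpoly1_q)
qed

lemma poly_fun3_A3: "poly_fun3 A3"
  unfolding A3_def A_on_def fst_conv snd_conv
  by (intro poly_fun3.eval2_comp poly_fun3.add poly_fun3.power poly_fun3_x poly_fun3_y poly_fun3_z)

lemma poly_fun3_B3: "poly_fun3 B3"
  unfolding B3_def B_on_def fst_conv snd_conv
  by (intro poly_fun3.eval2_comp poly_fun3.add poly_fun3.power poly_fun3_x poly_fun3_y poly_fun3_z)

lemma poly_fun3_homog: "poly_fun3 (\<lambda>P. homog N c (A3 P) (B3 P))"
  by (intro poly_fun3.homog_comp poly_fun3_A3 poly_fun3_B3)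

lemma tube_map_ratmap:
  obtains R\<tau> :: ratmap3 where "\<And>P. rm_defined R\<tau> P \<longleftrightarrow> poly (cpoly1 q) (fst P) \<noteq> 0"
    "\<And>P. rm_defined R\<tau> P \<Longrightarrow> tube_map P = rm_eval R\<tau> P"
proof -
  have "poly_fun3 (\<lambda>P. poly (cpoly1 p) (fst P))" "poly_fun3 (\<lambda>P. poly (cpoly1 q) (fst P))"
    "poly_fun3 (\<lambda>P. poly (cpoly1 d) (fst P) * fst (snd P) * poly (cpoly1 g) (fst P))"
    "poly_fun3 (\<lambda>P. poly (cpoly1 d) (fst P) * snd (snd P) * poly (cpoly1 g) (fst P))"
    by (intro poly_fun3.mult poly_fun3.poly_comp poly_fun3_x poly_fun3_y poly_fun3_z)+
  from poly_fun3_ratmap[OF this(1,3,4,2)] obtain R\<tau> where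
    R\<tau>: "\<And>P. rm_defined R\<tau> P \<longleftrightarrow> poly (cpoly1 q) (fst P) \<noteq> 0"
    "\<And>P. rm_eval R\<tau> P =
      (poly (cpoly1 p) (fst P) / poly (cpoly1 q) (fst P),
       poly (cpoly1 d) (fst P) * fst (snd P) * poly (cpoly1 g) (fst P) / poly (cpoly1 q) (fst P),
       poly (cpoly1 d) (fst P) * snd (snd P) * poly (cpoly1 g) (fst P) / poly (cpoly1 q) (fst P))"
    by blast
  have "tube_map P = rm_eval R\<tau> P" if "rm_defined R\<tau> P" for P
    using that by (cases P) (simp add: R\<tau> tube_map_ratmap_form)
  with R\<tau>(1) show ?thesis using that by blast
qed

lemma inverse_map_ratmap:
  obtains R\<psi> :: ratmap3 where "\<And>P. rm_defined R\<psi> P \<longleftrightarrow> B3 P * d_hom P \<noteq> 0"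
    "\<And>P. rm_eval R\<psi> P = inverse_map P"
proof -
  have "poly_fun3 (\<lambda>P. A3 P * d_hom P)" "poly_fun3 (\<lambda>P. B3 P * d_hom P)"
    "poly_fun3 (\<lambda>P. fst (snd P) * q_tilde_hom P * B3 P)"
    "poly_fun3 (\<lambda>P. snd (snd P) * q_tilde_hom P * B3 P)"
    unfolding d_hom_def q_tilde_hom_def
    by (intro poly_fun3.mult poly_fun3_A3 poly_fun3_B3 poly_fun3_homog poly_fun3_y poly_fun3_z)+
  from poly_fun3_ratmap[OF this(1,3,4,2)] show ?thesis
    using that unfolding inverse_map_def by blast
qed

lemma good_d_nonroots:
  obtains R where "\<And>s. poly (cpoly1 R) s \<noteq> 0 \<Longrightarrow> s \<in> good \<and> poly (cpoly1 d) s \<noteq> 0"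
    "\<exists>s. poly (cpoly1 R) s \<noteq> 0"
proof -
  obtain R0 where R0: "R0 \<noteq> 0" "\<And>s. poly (cpoly1 R0) s \<noteq> 0 \<Longrightarrow> s \<in> good"
    by (rule good_nonroots) blast
  have "R0 * d \<noteq> 0" using R0(1) d_nz by simp
  then have "infinite {s. poly (cpoly1 (R0 * d)) s \<noteq> 0}" by (intro infinite_nonroots) simp
  then have "\<exists>s. poly (cpoly1 (R0 * d)) s \<noteq> 0" by (metis (mono_tags) empty_Collect_eq finite.emptyI)
  with R0 \<open>R0 * d \<noteq> 0\<close> show ?thesis by (intro that[of "R0 * d"]) (simp_all add: cpoly1_mult)
qed

lemma tube_left_inverse:
  assumes R\<tau>: "\<And>P. rm_defined R\<tau> P \<longleftrightarrow> poly (cpoly1 q) (fst P) \<noteq> 0"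
    "\<And>P. rm_defined R\<tau> P \<Longrightarrow> tube_map P = rm_eval R\<tau> P"
    and R\<psi>: "\<And>P. rm_defined R\<psi> P \<longleftrightarrow> B3 P * d_hom P \<noteq> 0" "\<And>P. rm_eval R\<psi> P = inverse_map P"
  obtains D where "ratmap_left_inverse (tube h) (zero_set f) R\<tau> R\<psi> D"
proof -
  obtain R where R: "\<And>s. poly (cpoly1 R) s \<noteq> 0 \<Longrightarrow> s \<in> good \<and> poly (cpoly1 d) s \<noteq> 0"
    "\<exists>s. poly (cpoly1 R) s \<noteq> 0"
    by (rule good_d_nonroots) blast
  have "poly_fun3 (\<lambda>P. poly (cpoly1 R) (fst P))" by (intro poly_fun3.poly_comp poly_fun3_x)
  then obtain D where D: "\<And>P. evalC D P = poly (cpoly1 R) (fst P)" unfolding poly_fun3_def by blast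
  from R(2) obtain s where s: "poly (cpoly1 R) s \<noteq> 0" by blast
  have "(s, csqrt (poly (cpoly1 h) s), 0) \<in> tube h" by (simp add: tube_def)
  moreover have "evalC D (s, csqrt (poly (cpoly1 h) s), 0) \<noteq> 0" using s by (simp add: D)
  ultimately have "\<exists>P\<in>tube h. evalC D P \<noteq> 0" by blast
  moreover have "rm_defined R\<tau> P \<and> rm_eval R\<tau> P \<in> zero_set f \<and>
      rm_defined R\<psi> (rm_eval R\<tau> P) \<and> rm_eval R\<psi> (rm_eval R\<tau> P) = P"
    if "P \<in> tube h" "evalC D P \<noteq> 0" for P
  proof -
    obtain x y z where P: "P = (x, y, z)" by (cases P)
    have x: "x \<in> good" "poly (cpoly1 d) x \<noteq> 0" using R(1) that(2) by (simp_all add: D P)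
    then have "rm_defined R\<tau> P" using R\<tau>(1) by (simp add: P good_def)
    then show ?thesis using tube_to_surface[of x y z] that(1) x R\<tau>(2) R\<psi> by (simp add: P)
  qed
  ultimately show ?thesis using that unfolding ratmap_left_inverse_def by blast
qed

lemma surface_left_inverse:
  assumes R\<tau>: "\<And>P. rm_defined R\<tau> P \<longleftrightarrow> poly (cpoly1 q) (fst P) \<noteq> 0"
    "\<And>P. rm_defined R\<tau> P \<Longrightarrow> tube_map P = rm_eval R\<tau> P"
    and R\<psi>: "\<And>P. rm_defined R\<psi> P \<longleftrightarrow> B3 P * d_hom P \<noteq> 0" "\<And>P. rm_eval R\<psi> P = inverse_map P"
  obtains E where "ratmap_left_inverse (zero_set f) (tube h) R\<psi> R\<tau> E"
proof -
  have "poly_fun3 (\<lambda>P. B3 P * d_hom P * q_hom P)"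
    unfolding d_hom_def q_hom_def by (intro poly_fun3.mult poly_fun3_B3 poly_fun3_homog)
  then obtain E where E: "\<And>P. evalC E P = B3 P * d_hom P * q_hom P" unfolding poly_fun3_def by blast
  obtain R where R: "\<And>s. poly (cpoly1 R) s \<noteq> 0 \<Longrightarrow> s \<in> good \<and> poly (cpoly1 d) s \<noteq> 0"
    "\<exists>s. poly (cpoly1 R) s \<noteq> 0"
    by (rule good_d_nonroots) blast
  then obtain s where s: "s \<in> good" "poly (cpoly1 d) s \<noteq> 0" by blast
  define Q where "Q = (X s, csqrt (W s), 0 :: complex)"
  have "Q \<in> zero_set f"
    using param_on_curve s(1) by (simp add: Q_def zero_set_def evalC_f good_def)
  moreover have "evalC E Q \<noteq> 0"
  proof -
    have A3: "A3 Q = s * B_at s" and B3: "B3 Q = B_at s"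
      using param_inverse[OF s(1)] by (simp_all add: Q_def A3_def B3_def A_on_def B_on_def A_at_def B_at_def)
    show ?thesis using s by (simp add: E d_hom_def q_hom_def A3 B3 homog_N good_def)
  qed
  moreover have "rm_defined R\<psi> Q \<and> rm_eval R\<psi> Q \<in> tube h \<and>
      rm_defined R\<tau> (rm_eval R\<psi> Q) \<and> rm_eval R\<tau> (rm_eval R\<psi> Q) = Q"
    if "Q \<in> zero_set f" "evalC E Q \<noteq> 0" for Q
  proof -
    obtain x y z where Q: "Q = (x, y, z)" by (cases Q)
    have nz: "B3 (x, y, z) * d_hom (x, y, z) * q_hom (x, y, z) \<noteq> 0" using that(2) by (simp add: E Q)
    note inv = surface_to_tube[OF that(1)[unfolded Q] nz]
    have "rm_defined R\<tau> (inverse_map Q)" using R\<tau>(1) inv(2) by (simp add: Q)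
    then show ?thesis using inv nz R\<tau>(2) R\<psi> by (simp add: Q)
  qed
  ultimately show ?thesis using that unfolding ratmap_left_inverse_def by blast
qed

end

theorem theorem3:
  fixes f :: "real poly poly poly" and p q r h d :: "real poly"
  assumes sor: "surface_of_revolution_x_axis f"
    and irr: "absolutely_irreducible f"
    and param: "proper_parametrization (profile_half f) p q r"
    and fact: "(r div gcd r q) * (q div gcd r q) = h * d\<^sup>2"
    and sqf: "squarefree h"
  shows "birationally_equivalent (zero_set f) (tube h) \<and>
         birational_map (tube h) (zero_set f)
           (\<lambda>(x, y, z).
              let g = map_poly complex_of_real (gcd r q);
                  pt = poly (map_poly complex_of_real p) x / poly g x;
                  qt = poly (map_poly complex_of_real (q div gcd r q)) x;
                  dx = poly (map_poly complex_of_real d) x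
              in (pt / qt, dx * y / qt, dx * z / qt))"
proof -
  from param obtain A B :: "real poly poly" and t0 where "tube_parametrization f p q r A B t0 h d"
    unfolding proper_parametrization_def tube_parametrization_def profile_parametrization_def
      tube_parametrization_axioms_def
    using sor irr fact by metis
  then interpret tube_parametrization f p q r A B t0 h d .
  obtain R\<tau> where R\<tau>: "\<And>P. rm_defined R\<tau> P \<longleftrightarrow> poly (cpoly1 q) (fst P) \<noteq> 0"
    "\<And>P. rm_defined R\<tau> P \<Longrightarrow> tube_map P = rm_eval R\<tau> P"
    by (rule tube_map_ratmap) blast
  obtain R\<psi> where R\<psi>: "\<And>P. rm_defined R\<psi> P \<longleftrightarrow> B3 P * d_hom P \<noteq> 0" "\<And>P. rm_eval R\<psi> P = inverse_map P"
    by (rule inverse_map_ratmap) blast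
  obtain D where D: "ratmap_left_inverse (tube h) (zero_set f) R\<tau> R\<psi> D"
    using tube_left_inverse[OF R\<tau> R\<psi>] .
  obtain E where E: "ratmap_left_inverse (zero_set f) (tube h) R\<psi> R\<tau> E"
    using surface_left_inverse[OF R\<tau> R\<psi>] .
  have "birational_map (zero_set f) (tube h) (rm_eval R\<psi>)" by (rule birational_mapI[OF E D]) simp
  moreover have "birational_map (tube h) (zero_set f) tube_map" by (rule birational_mapI[OF D E R\<tau>(2)])
  ultimately show ?thesis unfolding birationally_equivalent_def tube_map_def by blast
qed

end
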